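(* Let $k\ge 2$ be a constant integer. Any algorithm that, for every $n$-variable $(k,1,0)$-CNF formula $\Phi$, exactly learns $\Phi$ from i.i.d. uniform random solutions of $\Phi$ with probability at least $\frac13$ requires $\Omega_k(\log n)$ samples.
   Context: A $(k,d,s)$-CNF formula on variable set $V$ is a CNF formula in which every clause contains exactly $k$ distinct variables, every variable appears in at most $d$ clauses, and any two distinct clauses share at most $s$ variables (so a $(k,1,0)$-CNF formula has pairwise disjoint clauses). $\mu_\Phi$ denotes the uniform distribution over satisfying assignments of $\Phi$. Exactly learning $\Phi$ means outputting, from i.i.d. samples of $\mu_\Phi$, a CNF formula $\widehat\Phi$ with $\mu_{\widehat\Phi}=\mu_\Phi$ (the same set of satisfying assignments). *)

theory Defs
  imports "HOL-Probability.Probability"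
begin

text \<open>A literal is a pair (variable, polarity); a clause is a set of literals; a CNF formula
  is a set of clauses. An assignment on {0..<n} is represented by the set of variables
  that are set to True (a subset of {0..<n}).\<close>

type_synonym literal = "nat \<times> bool"
type_synonym clause = "literal set"
type_synonym cnf = "clause set"
type_synonym assignment = "nat set"

definition clause_vars :: "clause \<Rightarrow> nat set" where
  "clause_vars C = fst ` C"

definition lit_true :: "assignment \<Rightarrow> literal \<Rightarrow> bool" where
  "lit_true x l = ((fst l \<in> x) = snd l)"

definition satisfies :: "assignment \<Rightarrow> cnf \<Rightarrow> bool" where
  "satisfies x \<Phi> = (\<forall>C\<in>\<Phi>. \<exists>l\<in>C. lit_true x l)"

definition sols :: "nat \<Rightarrow> cnf \<Rightarrow> assignment set" where
  "sols n \<Phi> = {x. x \<subseteq> {..<n} \<and> satisfies x \<Phi>}"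

definition kds_cnf :: "nat \<Rightarrow> nat \<Rightarrow> nat \<Rightarrow> nat \<Rightarrow> cnf \<Rightarrow> bool" where
  "kds_cnf n k d s \<Phi> \<longleftrightarrow>
     finite \<Phi> \<and>
     (\<forall>C\<in>\<Phi>. finite C \<and> inj_on fst C \<and> card (clause_vars C) = k \<and> clause_vars C \<subseteq> {..<n}) \<and>
     (\<forall>v<n. card {C\<in>\<Phi>. v \<in> clause_vars C} \<le> d) \<and>
     (\<forall>C\<in>\<Phi>. \<forall>D\<in>\<Phi>. C \<noteq> D \<longrightarrow> card (clause_vars C \<inter> clause_vars D) \<le> s)"

definition mu :: "nat \<Rightarrow> cnf \<Rightarrow> assignment pmf" where
  "mu n \<Phi> = pmf_of_set (sols n \<Phi>)"

fun iid_samples :: "nat \<Rightarrow> 'a pmf \<Rightarrow> 'a list pmf" where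
  "iid_samples 0 p = return_pmf []"
| "iid_samples (Suc m) p = bind_pmf p (\<lambda>x. bind_pmf (iid_samples m p) (\<lambda>xs. return_pmf (x # xs)))"

definition success_prob :: "(nat \<Rightarrow> assignment list \<Rightarrow> cnf pmf) \<Rightarrow> nat \<Rightarrow> nat \<Rightarrow> cnf \<Rightarrow> real" where
  "success_prob A n m \<Phi> =
     measure_pmf.prob (bind_pmf (iid_samples m (mu n \<Phi>)) (A n)) {\<Psi>. sols n \<Psi> = sols n \<Phi>}"

end

theory Submission
  imports Defs
begin

text \<open>The hard instances are the formulas consisting of one positive clause on a block
  \<open>{j*k..<j*k+k}\<close> of variables, for \<open>j < n div k\<close>: they are (k,1,0)-CNF formulas with pairwise
  different solution sets. At least half of all assignments satisfy such a clause, so its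
  solution distribution has density at most 2 with respect to the uniform distribution U on
  assignments, and m i.i.d. samples have density at most \<open>2^m\<close> with respect to m uniform
  samples. Feed the learner m uniform samples: the events "the output is equivalent to the j-th
  formula" are disjoint, and each has probability at least \<open>2^-m/3\<close> because the learner
  succeeds on the j-th formula. Hence \<open>n div k \<le> 3 * 2^m\<close>, i.e. \<open>m = \<Omega>(log n)\<close>.\<close>

lemma iid_samples_Suc_eq_map_pair:
  "iid_samples (Suc m) p = map_pmf (\<lambda>(x, xs). x # xs) (pair_pmf p (iid_samples m p))"
  by (simp add: pair_pmf_def map_bind_pmf bind_assoc_pmf bind_return_pmf map_pmf_def)

lemma pmf_iid_samples:
  "pmf (iid_samples m p) xs = (if length xs = m then (\<Prod>x\<leftarrow>xs. pmf p x) else 0)"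
proof (induction m arbitrary: xs)
  case 0
  then show ?case by (simp add: pmf_return)
next
  case (Suc m)
  have inj: "inj (\<lambda>(x, xs). x # xs)" by (simp add: inj_def)
  show ?case
  proof (cases xs)
    case Nil
    then show ?thesis
      by (simp add: iid_samples_Suc_eq_map_pair pmf_eq_0_set_pmf split_beta image_iff
          del: iid_samples.simps)
  next
    case (Cons y ys)
    then show ?thesis
      using pmf_map_inj'[OF inj, of "pair_pmf p (iid_samples m p)" "(y, ys)"]
      by (simp add: iid_samples_Suc_eq_map_pair pmf_pair Suc.IH del: iid_samples.simps)
  qed
qed

lemma pmf_iid_samples_le_power:
  fixes r :: real
  assumes "r \<ge> 0" and "\<And>x. pmf p x \<le> r * pmf q x"
  shows "pmf (iid_samples m p) xs \<le> r ^ m * pmf (iid_samples m q) xs"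
proof -
  have "(\<Prod>x\<leftarrow>xs. pmf p x) \<le> r ^ length xs * (\<Prod>x\<leftarrow>xs. pmf q x)"
  proof (induction xs)
    case (Cons x xs)
    have "0 \<le> (\<Prod>x\<leftarrow>xs. pmf p x)" by (rule prod_list_nonneg) auto
    then have "pmf p x * (\<Prod>x\<leftarrow>xs. pmf p x) \<le> (r * pmf q x) * (r ^ length xs * (\<Prod>x\<leftarrow>xs. pmf q x))"
      using assms Cons.IH by (intro mult_mono) auto
    then show ?case by (simp add: algebra_simps)
  qed simp
  then show ?thesis by (auto simp: pmf_iid_samples)
qed

lemma nn_integral_pmf_le_of_pmf_le:
  fixes r :: real
  assumes "r \<ge> 0" and "\<And>x. pmf p x \<le> r * pmf q x"
  shows "(\<integral>\<^sup>+x. f x \<partial>p) \<le> ennreal r * (\<integral>\<^sup>+x. f x \<partial>q)"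
proof -
  have "(\<integral>\<^sup>+x. f x \<partial>p) = (\<integral>\<^sup>+x. ennreal (pmf p x) * f x \<partial>count_space UNIV)"
    by (rule nn_integral_measure_pmf)
  also have "\<dots> \<le> (\<integral>\<^sup>+x. ennreal r * (ennreal (pmf q x) * f x) \<partial>count_space UNIV)"
  proof (rule nn_integral_mono)
    fix x
    have "ennreal (pmf p x) \<le> ennreal r * ennreal (pmf q x)"
      using assms by (simp add: ennreal_mult[symmetric])
    then show "ennreal (pmf p x) * f x \<le> ennreal r * (ennreal (pmf q x) * f x)"
      by (metis mult.assoc mult_right_mono zero_le)
  qed
  also have "\<dots> = ennreal r * (\<integral>\<^sup>+x. f x \<partial>q)"
    by (simp add: nn_integral_cmult nn_integral_measure_pmf)
  finally show ?thesis .
qed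

lemma card_mult_le_of_pmf_le:
  fixes p :: "'i \<Rightarrow> 'a pmf" and A :: "'a \<Rightarrow> 'b pmf" and r \<delta> :: real
  assumes "finite J" and disj: "disjoint_family_on E J" and "r \<ge> 0"
    and density: "\<And>j x. j \<in> J \<Longrightarrow> pmf (p j) x \<le> r * pmf q x"
    and success: "\<And>j. j \<in> J \<Longrightarrow> \<delta> \<le> measure_pmf.prob (bind_pmf (p j) A) (E j)"
  shows "real (card J) * \<delta> \<le> r"
proof (cases "\<delta> \<le> 0")
  case True
  then show ?thesis using \<open>r \<ge> 0\<close> by (meson mult_nonneg_nonpos of_nat_0_le_iff order_trans)
next
  case False
  have "ennreal (real (card J) * \<delta>) = (\<Sum>j\<in>J. ennreal \<delta>)"
    using False by (simp add: ennreal_mult ennreal_of_nat_eq_real_of_nat)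
  also have "\<dots> \<le> (\<Sum>j\<in>J. emeasure (bind_pmf (p j) A) (E j))"
    using success by (intro sum_mono) (simp add: measure_pmf.emeasure_eq_measure)
  also have "\<dots> \<le> (\<Sum>j\<in>J. ennreal r * (\<integral>\<^sup>+x. emeasure (A x) (E j) \<partial>q))"
    using density \<open>r \<ge> 0\<close> by (intro sum_mono) (simp add: nn_integral_pmf_le_of_pmf_le)
  also have "\<dots> = ennreal r * (\<integral>\<^sup>+x. (\<Sum>j\<in>J. emeasure (A x) (E j)) \<partial>q)"
    by (simp add: sum_distrib_left nn_integral_sum)
  also have "\<dots> = ennreal r * (\<integral>\<^sup>+x. emeasure (A x) (\<Union>j\<in>J. E j) \<partial>q)"
    using \<open>finite J\<close> disj by (simp add: sum_emeasure)
  also have "\<dots> \<le> ennreal r * (\<integral>\<^sup>+x. 1 \<partial>q)"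
    by (intro mult_left_mono nn_integral_mono measure_pmf.emeasure_le_1) simp
  finally show ?thesis using \<open>r \<ge> 0\<close> by (simp add: ennreal_le_iff)
qed

lemma pmf_of_set_le_of_card_le:
  fixes r :: real
  assumes "finite T" and "S \<subseteq> T" and "S \<noteq> {}" and card: "real (card T) \<le> r * card S"
  shows "pmf (pmf_of_set S) x \<le> r * pmf (pmf_of_set T) x"
proof -
  have "finite S" "T \<noteq> {}" and cards: "card S > 0" "card T > 0"
    using assms by (auto intro: finite_subset simp: card_gt_0_iff)
  have "r > 0"
    using card cards by (smt (verit) of_nat_0_less_iff mult_nonpos_nonneg of_nat_0_le_iff)
  moreover have "1 / card S \<le> r / card T"
    using card cards by (simp add: field_simps)
  ultimately show ?thesis
    using assms \<open>finite S\<close> \<open>T \<noteq> {}\<close> by (auto simp: indicator_def)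
qed

definition positive_clause :: "nat set \<Rightarrow> clause" where
  "positive_clause V = (\<lambda>v. (v, True)) ` V"

definition block :: "nat \<Rightarrow> nat \<Rightarrow> nat set" where
  "block k j = {j * k..<j * k + k}"

lemma clause_vars_positive_clause [simp]: "clause_vars (positive_clause V) = V"
  by (force simp: clause_vars_def positive_clause_def)

lemma sols_positive_clause: "sols n {positive_clause V} = {x. x \<subseteq> {..<n} \<and> x \<inter> V \<noteq> {}}"
  by (auto simp: sols_def satisfies_def positive_clause_def lit_true_def)

lemma sols_subset_Pow: "sols n \<Phi> \<subseteq> Pow {..<n}"
  by (auto simp: sols_def)

lemma kds_cnf_positive_clause:
  assumes "finite V" and "V \<subseteq> {..<n}"
  shows "kds_cnf n (card V) 1 0 {positive_clause V}"
  using assms unfolding kds_cnf_def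
  by (auto simp: card_le_Suc0_iff_eq) (auto simp: positive_clause_def inj_on_def)

lemma card_sols_positive_clause:
  assumes "v \<in> V" and "V \<subseteq> {..<n}"
  shows "2 ^ n \<le> 2 * card (sols n {positive_clause V})"
proof -
  have "v < n" using assms by auto
  have "inj_on (insert v) (Pow ({..<n} - {v}))" by (auto simp: inj_on_def)
  moreover have "insert v ` Pow ({..<n} - {v}) \<subseteq> sols n {positive_clause V}"
    using assms by (auto simp: sols_positive_clause)
  ultimately have "card (Pow ({..<n} - {v})) \<le> card (sols n {positive_clause V})"
    by (meson card_inj_on_le finite_subset[OF sols_subset_Pow] finite_Pow_iff finite_lessThan)
  moreover have "card (Pow ({..<n} - {v})) = 2 ^ (n - 1)"
    using \<open>v < n\<close> by (simp add: card_Pow)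
  moreover have "(2::nat) ^ n = 2 * 2 ^ (n - 1)"
    using \<open>v < n\<close> by (simp add: power_eq_if)
  ultimately show ?thesis by linarith
qed

lemma pmf_mu_positive_clause_le:
  assumes "V \<noteq> {}" and "V \<subseteq> {..<n}"
  shows "pmf (mu n {positive_clause V}) x \<le> 2 * pmf (pmf_of_set (Pow {..<n})) x"
proof -
  obtain v where "v \<in> V" using assms by blast
  have "2 ^ n \<le> 2 * card (sols n {positive_clause V})"
    using card_sols_positive_clause[OF \<open>v \<in> V\<close> assms(2)] .
  then have "real (2 ^ n) \<le> real (2 * card (sols n {positive_clause V}))"
    by (simp only: of_nat_le_iff)
  then have "real (card (Pow {..<n})) \<le> 2 * real (card (sols n {positive_clause V}))"
    by (simp add: card_Pow)
  moreover have "sols n {positive_clause V} \<noteq> {}"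
    using \<open>v \<in> V\<close> assms(2) by (auto simp: sols_positive_clause)
  ultimately show ?thesis
    unfolding mu_def
    by (intro pmf_of_set_le_of_card_le sols_subset_Pow finite_Pow_iff[THEN iffD2] finite_lessThan)
qed

lemma sols_positive_clause_neq:
  assumes "V \<noteq> {}" and "V \<subseteq> {..<n}" and "V \<inter> W = {}"
  shows "sols n {positive_clause V} \<noteq> sols n {positive_clause W}"
proof -
  have "V \<in> sols n {positive_clause V}" and "V \<notin> sols n {positive_clause W}"
    using assms by (auto simp: sols_positive_clause)
  then show ?thesis by blast
qed

lemma finite_block [simp]: "finite (block k j)"
  by (simp add: block_def)

lemma card_block [simp]: "card (block k j) = k"
  by (simp add: block_def)

lemma block_subset_lessThan:
  assumes "j < n div k"
  shows "block k j \<subseteq> {..<n}"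
proof -
  have "j * k + k \<le> n div k * k"
    using assms by (metis Suc_leI add.commute mult_Suc mult_le_mono1)
  also have "\<dots> \<le> n" by simp
  finally show ?thesis by (auto simp: block_def)
qed

lemma block_disjoint:
  assumes "j \<noteq> j'"
  shows "block k j \<inter> block k j' = {}"
proof -
  have "j * k + k \<le> j' * k \<or> j' * k + k \<le> j * k"
    using assms by (metis Suc_leI add.commute linorder_neqE_nat mult_Suc mult_le_mono1)
  then show ?thesis by (auto simp: block_def)
qed

lemma block_nonempty: "k > 0 \<Longrightarrow> block k j \<noteq> {}"
  by (simp add: block_def)

lemma exact_learner_sample_bound:
  assumes "k > 0"
    and learns: "\<forall>\<Phi>. kds_cnf n k 1 0 \<Phi> \<longrightarrow> success_prob A n m \<Phi> \<ge> 1/3"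
  shows "n div k \<le> 3 * 2 ^ m"
proof -
  define \<Phi> where "\<Phi> j = {positive_clause (block k j)}" for j
  define U where "U = pmf_of_set (Pow {..<n})"
  have block: "block k j \<noteq> {}" "block k j \<subseteq> {..<n}" if "j < n div k" for j
    using that \<open>k > 0\<close> by (auto simp: block_nonempty block_subset_lessThan)
  have "real (card {..<n div k}) * (1/3) \<le> 2 ^ m"
  proof (rule card_mult_le_of_pmf_le
      [where p = "\<lambda>j. iid_samples m (mu n (\<Phi> j))" and q = "iid_samples m U" and A = "A n"
        and E = "\<lambda>j. {\<Psi>. sols n \<Psi> = sols n (\<Phi> j)}"])
    show "disjoint_family_on (\<lambda>j. {\<Psi>. sols n \<Psi> = sols n (\<Phi> j)}) {..<n div k}"
      using block sols_positive_clause_neq[OF _ _ block_disjoint]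
      by (fastforce simp: disjoint_family_on_def \<Phi>_def)
    show "pmf (iid_samples m (mu n (\<Phi> j))) xs \<le> 2 ^ m * pmf (iid_samples m U) xs"
      if "j \<in> {..<n div k}" for j xs
      using block that
      by (intro pmf_iid_samples_le_power) (auto simp: \<Phi>_def U_def pmf_mu_positive_clause_le)
    show "1/3 \<le> measure_pmf.prob (bind_pmf (iid_samples m (mu n (\<Phi> j))) (A n))
                  {\<Psi>. sols n \<Psi> = sols n (\<Phi> j)}" if "j \<in> {..<n div k}" for j
      using learns kds_cnf_positive_clause[of "block k j" n] block that
      by (simp add: \<Phi>_def success_prob_def)
  qed simp_all
  then have "real (n div k) \<le> real (3 * 2 ^ m)" by simp
  then show ?thesis by (simp only: of_nat_le_iff)
qed

lemma le_four_power_of_div_le: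
  fixes k n m :: nat
  assumes "k > 0" and "36 * k\<^sup>2 \<le> n" and "n div k \<le> 3 * 2 ^ m"
  shows "n \<le> 4 ^ m"
proof -
  have "k \<le> k * k" using assms(1) by simp
  then have "2 * k \<le> n" using assms(2) unfolding power2_eq_square by linarith
  moreover have "n < k * (n div k) + k"
    using mult_div_mod_eq[of k n] mod_less_divisor[OF assms(1), of n] by linarith
  ultimately have "n \<le> 2 * k * (n div k)" by simp
  also have "\<dots> \<le> 6 * k * 2 ^ m" using assms(3) by simp
  finally have bound: "n \<le> 6 * k * 2 ^ m" .
  have "n * n \<le> (6 * k * 2 ^ m) * (6 * k * 2 ^ m)"
    using mult_le_mono[OF bound bound] .
  also have "\<dots> = 36 * k\<^sup>2 * 4 ^ m"
  proof -
    have "(2::nat) ^ m * 2 ^ m = 4 ^ m" by (simp flip: power_mult_distrib)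
    then show ?thesis by (simp add: power2_eq_square algebra_simps)
  qed
  also have "\<dots> \<le> n * 4 ^ m" using assms(2) by simp
  finally show ?thesis using \<open>2 * k \<le> n\<close> assms(1) by simp
qed

theorem theorem1p6:
  fixes k :: nat
  assumes "k \<ge> 2"
  shows "\<exists>c>0. \<exists>N. \<forall>n\<ge>N. \<forall>m. \<forall>A :: nat \<Rightarrow> assignment list \<Rightarrow> cnf pmf.
           (\<forall>\<Phi>. kds_cnf n k 1 0 \<Phi> \<longrightarrow> success_prob A n m \<Phi> \<ge> 1/3)
           \<longrightarrow> real m \<ge> c * ln (real n)"
proof (intro exI[of _ "1 / ln 4"] conjI exI[of _ "36 * k\<^sup>2"] allI impI)
  fix n m :: nat and A :: "nat \<Rightarrow> assignment list \<Rightarrow> cnf pmf"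
  assume "36 * k\<^sup>2 \<le> n" and "\<forall>\<Phi>. kds_cnf n k 1 0 \<Phi> \<longrightarrow> success_prob A n m \<Phi> \<ge> 1/3"
  with assms have "n \<le> 4 ^ m"
    by (intro le_four_power_of_div_le exact_learner_sample_bound) auto
  then have "ln (real n) \<le> ln (4 ^ m)"
    by (cases "n = 0") simp_all
  then show "1 / ln 4 * ln (real n) \<le> real m" by (simp add: ln_realpow field_simps)
qed simp

end
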